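(* Let $P$ be any one-sided convex point set with $n\ge 2$ points. Then there exists a planar increasing-chord geometric graph with vertex set $P$ having exactly $2n-3$ edges.
   Context: A convex point set is a finite point set in the plane in which no point is a convex combination of the others; $\mathcal H_P$ denotes the convex hull of $P$. Let $\vec d$ be a directed straight line not orthogonal to any line through two points of $P$; ordering the points of $P$ by their orthogonal projections on $\vec d$, the first and last are the minimum and maximum points of $P$ with respect to $\vec d$. $P$ is one-sided with respect to $\vec d$ if its minimum and maximum points with respect to $\vec d$ are consecutive along the boundary of $\mathcal H_P$; $P$ is a one-sided convex point set if it is convex and one-sided with respect to some such directed line. A geometric graph consists of a point set and straight-line segments (edges) between its points; it is planar if no two edges cross. A geometric path $(v_1,\dots,v_k)$ is self-approaching from $v_1$ to $v_k$ if for every three distinct points $a,b,c$ appearing in this order along the path (possibly interior to edges) $|\overline{bc}|<|\overline{ac}|$, where $|\cdot|$ is Euclidean length. A geometric graph is increasing-chord if for every pair of vertices $u,v$ it contains a path between them that is self-approaching both from $u$ to $v$ and from $v$ to $u$. *)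

theory Defs
  imports "HOL-Analysis.Analysis"
begin

type_synonym pt = "real^2"

definition convex_point_set :: "pt set \<Rightarrow> bool" where
  "convex_point_set P \<longleftrightarrow> finite P \<and> (\<forall>p\<in>P. p \<notin> convex hull (P - {p}))"

text \<open>A directed line with direction d (only the direction matters for projections),
  not orthogonal to any line through two points of P.\<close>
definition generic_direction :: "pt set \<Rightarrow> pt \<Rightarrow> bool" where
  "generic_direction P d \<longleftrightarrow> d \<noteq> 0 \<and> (\<forall>p\<in>P. \<forall>q\<in>P. p \<noteq> q \<longrightarrow> (p - q) \<bullet> d \<noteq> 0)"

text \<open>Minimum point a and maximum point b w.r.t. d are consecutive along the
  boundary of the convex hull: the segment between them lies on the boundary.\<close>
definition one_sided_wrt :: "pt set \<Rightarrow> pt \<Rightarrow> bool" where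
  "one_sided_wrt P d \<longleftrightarrow>
     (\<exists>a\<in>P. \<exists>b\<in>P. (\<forall>p\<in>P. a \<bullet> d \<le> p \<bullet> d) \<and> (\<forall>p\<in>P. p \<bullet> d \<le> b \<bullet> d) \<and>
        closed_segment a b \<subseteq> frontier (convex hull P))"

definition one_sided_convex :: "pt set \<Rightarrow> bool" where
  "one_sided_convex P \<longleftrightarrow> convex_point_set P \<and>
     (\<exists>d. generic_direction P d \<and> one_sided_wrt P d)"

definition geometric_graph :: "pt set \<Rightarrow> pt set set \<Rightarrow> bool" where
  "geometric_graph P E \<longleftrightarrow> (\<forall>e\<in>E. e \<subseteq> P \<and> card e = 2)"

definition edge_seg :: "pt set \<Rightarrow> pt set" where
  "edge_seg e = (\<Union>a\<in>e. \<Union>b\<in>e. closed_segment a b)"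

definition planar_gg :: "pt set set \<Rightarrow> bool" where
  "planar_gg E \<longleftrightarrow> (\<forall>e1\<in>E. \<forall>e2\<in>E. e1 \<noteq> e2 \<longrightarrow> edge_seg e1 \<inter> edge_seg e2 \<subseteq> e1 \<inter> e2)"

text \<open>The polygonal curve of a vertex list, parametrized over [0, length vs - 1].\<close>
definition path_point :: "pt list \<Rightarrow> real \<Rightarrow> pt" where
  "path_point vs s = (let i = nat \<lfloor>s\<rfloor>; t = s - of_int \<lfloor>s\<rfloor> in
      if i + 1 < length vs then (1 - t) *\<^sub>R vs ! i + t *\<^sub>R vs ! (i + 1) else last vs)"

definition self_approaching :: "pt list \<Rightarrow> bool" where
  "self_approaching vs \<longleftrightarrow>
     (\<forall>s1 s2 s3. 0 \<le> s1 \<and> s1 < s2 \<and> s2 < s3 \<and> s3 \<le> real (length vs - 1) \<longrightarrow>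
        (let a = path_point vs s1; b = path_point vs s2; c = path_point vs s3 in
           a \<noteq> b \<and> b \<noteq> c \<and> a \<noteq> c \<longrightarrow> dist b c < dist a c))"

definition graph_path :: "pt set set \<Rightarrow> pt list \<Rightarrow> bool" where
  "graph_path E vs \<longleftrightarrow> vs \<noteq> [] \<and> distinct vs \<and>
     (\<forall>i. i + 1 < length vs \<longrightarrow> {vs ! i, vs ! (i + 1)} \<in> E)"

definition increasing_chord :: "pt set \<Rightarrow> pt set set \<Rightarrow> bool" where
  "increasing_chord P E \<longleftrightarrow>
     (\<forall>u\<in>P. \<forall>v\<in>P. \<exists>vs. graph_path E vs \<and> hd vs = u \<and> last vs = v \<and>
        self_approaching vs \<and> self_approaching (rev vs))"

end

theory Submission
  imports Defs
begin

(* Sort P by the coordinate x along d and let y be the coordinate along rot d, oriented so that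
   P lies below the hull edge ab joining the extreme points.  Then P is a convex chain
   p 0, ..., p (n - 1) and its y-values have no interior maximum.  Join p i and p j when every point
   strictly between them is lower than both, the two ends counting as highest.  Such visible pairs
   number exactly 2n - 3, two of them can only meet at a common end because the chain is convex,
   and any two points are joined by a path of visible edges monotone in both x and y; the steps
   of such a path pairwise make angles of at most 90 degrees, so it is self-approaching both ways. *)

section \<open>Coordinates in the plane\<close>

definition rot :: "pt \<Rightarrow> pt" where
  "rot v = (\<chi> i. if i = 1 then - (v $ 2) else v $ 1)"

lemma inner_real2: "(u::pt) \<bullet> v = u $ 1 * v $ 1 + u $ 2 * v $ 2"
  by (simp add: inner_vec_def sum_2)

lemma rot_nth [simp]: "rot v $ 1 = - (v $ 2)" "rot v $ 2 = v $ 1"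
  by (simp_all add: rot_def)

lemma inner_rot_decomp:
  "(d \<bullet> d) * (v \<bullet> w) = (v \<bullet> d) * (w \<bullet> d) + (v \<bullet> rot d) * (w \<bullet> rot d)"
  by (simp add: inner_real2 algebra_simps power2_eq_square)

lemma eq_if_inner_eq_rot:
  assumes "d \<noteq> 0" "u \<bullet> d = v \<bullet> d" "u \<bullet> rot d = v \<bullet> rot d"
  shows "u = v"
proof -
  have "(d \<bullet> d) * ((u - v) \<bullet> (u - v)) = 0"
    using inner_rot_decomp[of d "u - v" "u - v"] assms by (simp add: inner_diff_left)
  then show ?thesis using assms(1) by simp
qed

lemma inner_nonneg_if_same_quadrant:
  assumes "d \<noteq> 0" "c \<noteq> 0"
    and "0 \<le> (w \<bullet> d) * (w' \<bullet> d)" "0 \<le> (w \<bullet> (c *\<^sub>R rot d)) * (w' \<bullet> (c *\<^sub>R rot d))"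
  shows "0 \<le> w \<bullet> w'"
proof -
  have "(w \<bullet> (c *\<^sub>R rot d)) * (w' \<bullet> (c *\<^sub>R rot d)) = (c * c) * ((w \<bullet> rot d) * (w' \<bullet> rot d))"
    by simp
  moreover have "0 < c * c" using assms(2) not_real_square_gt_zero by blast
  ultimately have "0 \<le> (w \<bullet> rot d) * (w' \<bullet> rot d)"
    using assms(4) by (metis zero_le_mult_iff linorder_not_le)
  then have "0 \<le> (d \<bullet> d) * (w \<bullet> w')" using inner_rot_decomp[of d w w'] assms(3) by simp
  moreover have "0 < d \<bullet> d" using assms(1) by simp
  ultimately show ?thesis by (simp add: zero_le_mult_iff)
qed

section \<open>Self-approaching polygonal paths\<close>

lemma path_point_inner:
  assumes "vs \<noteq> []" "0 \<le> s" "s \<le> real (length vs - 1)"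
  shows "nat \<lfloor>s\<rfloor> + 1 < length vs \<and> path_point vs s \<bullet> u =
           (1 - frac s) * (vs ! nat \<lfloor>s\<rfloor> \<bullet> u) + frac s * (vs ! (nat \<lfloor>s\<rfloor> + 1) \<bullet> u)
       \<or> nat \<lfloor>s\<rfloor> = length vs - 1 \<and> path_point vs s \<bullet> u = vs ! (length vs - 1) \<bullet> u"
proof (cases "nat \<lfloor>s\<rfloor> + 1 < length vs")
  case True
  then show ?thesis by (simp add: path_point_def Let_def inner_add_left frac_def)
next
  case False
  have "nat \<lfloor>s\<rfloor> \<le> length vs - 1"
    using assms by (metis floor_mono floor_of_nat nat_mono nat_int of_nat_diff)
  then have "nat \<lfloor>s\<rfloor> = length vs - 1" using False by linarith
  then show ?thesis using False assms(1) by (simp add: path_point_def Let_def last_conv_nth)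
qed

lemma path_point_inner_bounds:
  assumes sorted: "sorted (map (\<lambda>v. v \<bullet> u) vs)"
    and "vs \<noteq> []" "0 \<le> s" "s \<le> real (length vs - 1)"
  shows "nat \<lfloor>s\<rfloor> < length vs"
    and "vs ! nat \<lfloor>s\<rfloor> \<bullet> u \<le> path_point vs s \<bullet> u"
    and "nat \<lfloor>s\<rfloor> + 1 < length vs \<Longrightarrow> path_point vs s \<bullet> u \<le> vs ! (nat \<lfloor>s\<rfloor> + 1) \<bullet> u"
proof -
  define i where "i = nat \<lfloor>s\<rfloor>"
  have f: "0 \<le> frac s" "frac s \<le> 1" by (simp_all add: frac_lt_1 less_imp_le)
  consider "i + 1 < length vs"
      "path_point vs s \<bullet> u = (1 - frac s) * (vs ! i \<bullet> u) + frac s * (vs ! (i + 1) \<bullet> u)"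
    | "i = length vs - 1" "path_point vs s \<bullet> u = vs ! (length vs - 1) \<bullet> u"
    using path_point_inner[OF assms(2-4), of u] unfolding i_def by blast
  then have "i < length vs \<and> vs ! i \<bullet> u \<le> path_point vs s \<bullet> u \<and>
      (i + 1 < length vs \<longrightarrow> path_point vs s \<bullet> u \<le> vs ! (i + 1) \<bullet> u)"
  proof cases
    case 1
    have "vs ! i \<bullet> u \<le> vs ! (i + 1) \<bullet> u"
      using sorted_nth_mono[OF sorted, of i "i + 1"] 1 by simp
    then have "frac s * (vs ! i \<bullet> u) \<le> frac s * (vs ! (i + 1) \<bullet> u)"
      and "(1 - frac s) * (vs ! i \<bullet> u) \<le> (1 - frac s) * (vs ! (i + 1) \<bullet> u)"
      using f by (simp_all add: mult_left_mono)
    then show ?thesis using 1 by (simp add: algebra_simps)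
  qed (use assms(2) in auto)
  then show "nat \<lfloor>s\<rfloor> < length vs" "vs ! nat \<lfloor>s\<rfloor> \<bullet> u \<le> path_point vs s \<bullet> u"
    "nat \<lfloor>s\<rfloor> + 1 < length vs \<Longrightarrow> path_point vs s \<bullet> u \<le> vs ! (nat \<lfloor>s\<rfloor> + 1) \<bullet> u"
    unfolding i_def by auto
qed

lemma path_point_inner_mono:
  assumes sorted: "sorted (map (\<lambda>v. v \<bullet> u) vs)"
    and ne: "vs \<noteq> []" and "0 \<le> s" "s \<le> s'" "s' \<le> real (length vs - 1)"
  shows "path_point vs s \<bullet> u \<le> path_point vs s' \<bullet> u"
proof -
  define i where "i = nat \<lfloor>s\<rfloor>"
  define i' where "i' = nat \<lfloor>s'\<rfloor>"
  have s: "0 \<le> s" "s \<le> real (length vs - 1)" and s': "0 \<le> s'" "s' \<le> real (length vs - 1)"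
    using assms by linarith+
  note bounds = path_point_inner_bounds[OF sorted ne s, folded i_def]
  note bounds' = path_point_inner_bounds[OF sorted ne s', folded i'_def]
  have "i \<le> i'" unfolding i_def i'_def using assms by (simp add: floor_mono nat_mono)
  show ?thesis
  proof (cases "i = i'")
    case True
    then have "\<lfloor>s\<rfloor> = \<lfloor>s'\<rfloor>" using s s' unfolding i_def i'_def by (simp add: eq_nat_nat_iff)
    then have "frac s \<le> frac s'" using assms by (simp add: frac_def)
    consider "i + 1 < length vs"
        "path_point vs s \<bullet> u = (1 - frac s) * (vs ! i \<bullet> u) + frac s * (vs ! (i + 1) \<bullet> u)"
      | "i = length vs - 1" "path_point vs s \<bullet> u = vs ! (length vs - 1) \<bullet> u"
      using path_point_inner[OF ne s, of u] unfolding i_def by blast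
    then show ?thesis
    proof cases
      case 1
      define A where "A = vs ! i \<bullet> u"
      define B where "B = vs ! (i + 1) \<bullet> u"
      have "path_point vs s' \<bullet> u = (1 - frac s') * A + frac s' * B"
        using path_point_inner[OF ne s', of u] 1(1) True unfolding i'_def A_def B_def by auto
      moreover have "A \<le> B" using sorted_nth_mono[OF sorted, of i "i + 1"] 1 by (simp add: A_def B_def)
      then have "frac s * (B - A) \<le> frac s' * (B - A)"
        by (intro mult_right_mono \<open>frac s \<le> frac s'\<close>) simp
      ultimately show ?thesis using 1(2) unfolding A_def[symmetric] B_def[symmetric]
        by (simp add: algebra_simps)
    next
      case 2
      then show ?thesis using path_point_inner[OF ne s', of u] True ne unfolding i'_def by auto
    qed
  next
    case False
    then have "i + 1 \<le> i'" "i' < length vs" using \<open>i \<le> i'\<close> bounds'(1) by simp_all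
    then have "path_point vs s \<bullet> u \<le> vs ! (i + 1) \<bullet> u" using bounds(3) by simp
    also have "\<dots> \<le> vs ! i' \<bullet> u"
      using sorted_nth_mono[OF sorted, of "i + 1" i'] \<open>i + 1 \<le> i'\<close> \<open>i' < length vs\<close> by simp
    also have "\<dots> \<le> path_point vs s' \<bullet> u" by (rule bounds'(2))
    finally show ?thesis .
  qed
qed

(* The displacements b - a and c - b both lie in the cone where u1 and u2 are nonnegative,
   so their inner product is nonnegative and |c - a|^2 >= |b - a|^2 + |c - b|^2. *)
lemma self_approaching_if_sorted_inner:
  fixes vs :: "pt list"
  assumes ne: "vs \<noteq> []"
    and sorted1: "sorted (map (\<lambda>v. v \<bullet> u1) vs)" and sorted2: "sorted (map (\<lambda>v. v \<bullet> u2) vs)"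
    and acute: "\<And>w w'. 0 \<le> w \<bullet> u1 \<Longrightarrow> 0 \<le> w \<bullet> u2 \<Longrightarrow> 0 \<le> w' \<bullet> u1 \<Longrightarrow> 0 \<le> w' \<bullet> u2 \<Longrightarrow>
                        0 \<le> w \<bullet> w'"
  shows "self_approaching vs"
  unfolding self_approaching_def Let_def
proof (intro allI impI, elim conjE)
  fix s1 s2 s3 :: real
  assume s: "0 \<le> s1" "s1 < s2" "s2 < s3" "s3 \<le> real (length vs - 1)"
    and ab: "path_point vs s1 \<noteq> path_point vs s2"
  define a where "a = path_point vs s1"
  define b where "b = path_point vs s2"
  define c where "c = path_point vs s3"
  have mono: "path_point vs s \<bullet> u \<le> path_point vs s' \<bullet> u"
    if "u = u1 \<or> u = u2" "0 \<le> s" "s \<le> s'" "s' \<le> real (length vs - 1)" for s s' u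
    using that path_point_inner_mono[OF _ ne, of u s s'] sorted1 sorted2 by blast
  have "0 \<le> (b - a) \<bullet> u \<and> 0 \<le> (c - b) \<bullet> u" if "u = u1 \<or> u = u2" for u
    using mono[OF that, of s1 s2] mono[OF that, of s2 s3] s
    unfolding a_def b_def c_def inner_diff_left by simp
  then have "0 \<le> (b - a) \<bullet> (c - b)" using acute by blast
  moreover have "0 < (b - a) \<bullet> (b - a)" using ab unfolding a_def b_def by simp
  moreover have "(c - a) \<bullet> (c - a) = ((b - a) + (c - b)) \<bullet> ((b - a) + (c - b))" by simp
  then have "(c - a) \<bullet> (c - a) = (b - a) \<bullet> (b - a) + 2 * ((b - a) \<bullet> (c - b)) + (c - b) \<bullet> (c - b)"
    by (simp only: inner_add_left inner_add_right inner_commute[of "c - b" "b - a"])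
  ultimately have "(c - b) \<bullet> (c - b) < (c - a) \<bullet> (c - a)" by linarith
  then have "norm (c - b) < norm (c - a)" by (simp add: norm_lt)
  then show "dist b c < dist a c" by (simp add: dist_norm norm_minus_commute)
qed

lemma sorted_map_iff_successively: "sorted (map f xs) \<longleftrightarrow> successively (\<lambda>a b. f a \<le> f b) xs"
  unfolding sorted_map by (rule successively_conv_sorted_wrt[symmetric]) (auto simp: transp_def)

lemma sorted_inner_rev:
  "sorted (map (\<lambda>v. v \<bullet> u) vs) \<Longrightarrow> sorted (map (\<lambda>v. v \<bullet> - u) (rev vs))"
  unfolding sorted_map sorted_wrt_rev by (rule sorted_wrt_mono_rel[rotated]) simp_all

lemma self_approaching_singleton: "self_approaching [v]"
  unfolding self_approaching_def by auto

lemma graph_path_rev: "graph_path E vs \<Longrightarrow> graph_path E (rev vs)"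
  unfolding graph_path_def
proof (elim conjE, intro conjI allI impI)
  assume vs: "vs \<noteq> []" "distinct vs" "\<forall>i. i + 1 < length vs \<longrightarrow> {vs ! i, vs ! (i + 1)} \<in> E"
  show "rev vs \<noteq> []" "distinct (rev vs)" using vs by auto
  fix i assume i: "i + 1 < length (rev vs)"
  define j where "j = length vs - Suc (Suc i)"
  have "j + 1 < length vs" "rev vs ! i = vs ! (j + 1)" "rev vs ! (i + 1) = vs ! j"
    using i by (auto simp: rev_nth j_def Suc_diff_Suc)
  then show "{rev vs ! i, rev vs ! (i + 1)} \<in> E" using vs(3) by (metis insert_commute)
qed

section \<open>Visibility in a sequence of heights\<close>

definition lex_below :: "(nat \<Rightarrow> real) \<Rightarrow> nat \<Rightarrow> nat \<Rightarrow> bool" where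
  "lex_below h i j \<longleftrightarrow> h i < h j \<or> h i = h j \<and> i < j"

lemma lex_below_trans: "lex_below h i j \<Longrightarrow> lex_below h j k \<Longrightarrow> lex_below h i k"
  unfolding lex_below_def by auto

lemma lex_below_asym: "lex_below h i j \<Longrightarrow> \<not> lex_below h j i"
  unfolding lex_below_def by auto

lemma lex_below_total: "i \<noteq> j \<Longrightarrow> lex_below h i j \<or> lex_below h j i"
  unfolding lex_below_def by auto

lemma lex_below_if_le_at:
  "h i \<le> g i \<Longrightarrow> h k = g k \<Longrightarrow> lex_below g i k \<Longrightarrow> lex_below h i k"
  unfolding lex_below_def by auto

locale heights =
  fixes n :: nat and h :: "nat \<Rightarrow> real"
  assumes two_le_n: "2 \<le> n"
    and interior_below_first: "\<And>k. 0 < k \<Longrightarrow> k < n - 1 \<Longrightarrow> h k < h 0"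
    and first_le_last: "h 0 \<le> h (n - 1)"
begin

definition visible :: "nat \<Rightarrow> nat \<Rightarrow> bool" where
  "visible i j \<longleftrightarrow> i < j \<and> j < n \<and> (\<forall>k. i < k \<longrightarrow> k < j \<longrightarrow> lex_below h k i \<and> lex_below h k j)"

lemma visible_Suc: "i + 1 < n \<Longrightarrow> visible i (i + 1)"
  unfolding visible_def by auto

lemma visible_not_crossing:
  assumes "visible i j" "visible k l" "i < k" "k < j" "j < l"
  shows False
proof -
  have "lex_below h k j" using assms(1,3,4) unfolding visible_def by blast
  moreover have "lex_below h j k" using assms(2,4,5) unfolding visible_def by blast
  ultimately show False using lex_below_asym by blast
qed

lemma below_last: "i < n - 1 \<Longrightarrow> lex_below h i (n - 1)"
  using interior_below_first[of i] first_le_last unfolding lex_below_def by force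

lemma below_first: "0 < j \<Longrightarrow> j < n - 1 \<Longrightarrow> lex_below h j 0"
  using interior_below_first unfolding lex_below_def by blast

definition next_higher :: "nat \<Rightarrow> nat" where
  "next_higher i = (LEAST j. i < j \<and> j < n \<and> lex_below h i j)"

definition prev_higher :: "nat \<Rightarrow> nat" where
  "prev_higher j = Max {i. i < j \<and> lex_below h j i}"

lemma next_higher:
  assumes "i < n - 1"
  shows "i < next_higher i \<and> next_higher i < n \<and> lex_below h i (next_higher i)"
    and "\<And>k. i < k \<Longrightarrow> k < next_higher i \<Longrightarrow> lex_below h k i"
proof -
  show nh: "i < next_higher i \<and> next_higher i < n \<and> lex_below h i (next_higher i)"
    unfolding next_higher_def by (rule LeastI[of _ "n - 1"]) (use assms below_last in auto)
  fix k assume k: "i < k" "k < next_higher i"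
  have "\<not> (i < k \<and> k < n \<and> lex_below h i k)"
    using not_less_Least[of k "\<lambda>j. i < j \<and> j < n \<and> lex_below h i j"] k
    unfolding next_higher_def by blast
  then show "lex_below h k i" using k nh lex_below_total[of k i h] by auto
qed

lemma prev_higher:
  assumes "0 < j" "j < n - 1"
  shows "prev_higher j < j \<and> lex_below h j (prev_higher j)"
    and "\<And>k. prev_higher j < k \<Longrightarrow> k < j \<Longrightarrow> lex_below h k j"
proof -
  let ?S = "{i. i < j \<and> lex_below h j i}"
  have fin: "finite ?S" by (rule finite_subset[of _ "{..<j}"]) auto
  have "0 \<in> ?S" using assms below_first by auto
  then show "prev_higher j < j \<and> lex_below h j (prev_higher j)"
    using Max_in[OF fin] unfolding prev_higher_def by blast
  fix k assume k: "prev_higher j < k" "k < j"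
  then have "k \<notin> ?S" using Max_ge[OF fin, of k] unfolding prev_higher_def by (meson not_le)
  then show "lex_below h k j" using k lex_below_total[of k j h] by auto
qed

lemma visible_ascending_eq:
  "{(i, j). visible i j \<and> lex_below h i j} = (\<lambda>i. (i, next_higher i)) ` {..<n - 1}"
proof (intro equalityI subsetI)
  fix ij assume "ij \<in> {(i, j). visible i j \<and> lex_below h i j}"
  then obtain i j where ij: "ij = (i, j)" "visible i j" "lex_below h i j" by auto
  have "next_higher i = j"
    unfolding next_higher_def
  proof (rule Least_equality)
    show "i < j \<and> j < n \<and> lex_below h i j" using ij unfolding visible_def by auto
    show "j \<le> j'" if "i < j' \<and> j' < n \<and> lex_below h i j'" for j'
      using ij(2) that lex_below_asym unfolding visible_def by (meson not_le)
  qed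
  moreover have "i < n - 1" using ij(2) unfolding visible_def by auto
  ultimately show "ij \<in> (\<lambda>i. (i, next_higher i)) ` {..<n - 1}" using ij(1) by auto
next
  fix ij assume "ij \<in> (\<lambda>i. (i, next_higher i)) ` {..<n - 1}"
  then obtain i where i: "ij = (i, next_higher i)" "i < n - 1" by auto
  note nh = next_higher[OF i(2)]
  have "visible i (next_higher i)" unfolding visible_def using nh lex_below_trans by blast
  then show "ij \<in> {(i, j). visible i j \<and> lex_below h i j}" using i nh by auto
qed

lemma visible_descending_eq:
  "{(i, j). visible i j \<and> lex_below h j i} = (\<lambda>j. (prev_higher j, j)) ` {0<..<n - 1}"
proof (intro equalityI subsetI)
  fix ij assume "ij \<in> {(i, j). visible i j \<and> lex_below h j i}"
  then obtain i j where ij: "ij = (i, j)" "visible i j" "lex_below h j i" by auto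
  have "i < j" "j < n" using ij(2) unfolding visible_def by auto
  moreover have "j \<noteq> n - 1" using ij(3) below_last[of i] lex_below_asym \<open>i < j\<close> by auto
  ultimately have j: "0 < j" "j < n - 1" by auto
  let ?S = "{i. i < j \<and> lex_below h j i}"
  have "prev_higher j = i" unfolding prev_higher_def
  proof (rule Max_eqI)
    show "finite ?S" by (rule finite_subset[of _ "{..<j}"]) auto
    show "i \<in> ?S" using ij unfolding visible_def by auto
    show "i' \<le> i" if "i' \<in> ?S" for i'
    proof (rule ccontr)
      assume "\<not> i' \<le> i"
      then have "lex_below h i' j" using ij(2) that unfolding visible_def by auto
      then show False using that lex_below_asym by blast
    qed
  qed
  then show "ij \<in> (\<lambda>j. (prev_higher j, j)) ` {0<..<n - 1}" using ij(1) j by auto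
next
  fix ij assume "ij \<in> (\<lambda>j. (prev_higher j, j)) ` {0<..<n - 1}"
  then obtain j where j: "ij = (prev_higher j, j)" "0 < j" "j < n - 1" by auto
  note ph = prev_higher[OF j(2,3)]
  have "visible (prev_higher j) j" unfolding visible_def using ph j(3) by (auto intro: lex_below_trans)
  then show "ij \<in> {(i, j). visible i j \<and> lex_below h j i}" using j ph by auto
qed

(* An ascending visible pair is determined by its left end (the right end is the nearest higher
   point), a descending one by its right end; only the last point has nothing higher to its right
   and only the two ends have nothing higher to their left. *)
lemma card_visible: "card {(i, j). visible i j} = 2 * n - 3"
proof -
  let ?A = "{(i, j). visible i j \<and> lex_below h i j}"
  let ?D = "{(i, j). visible i j \<and> lex_below h j i}"
  have "{(i, j). visible i j} = ?A \<union> ?D"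
    using lex_below_total unfolding visible_def by (fastforce dest: less_imp_neq)
  moreover have "?A \<inter> ?D = {}" using lex_below_asym by auto
  moreover have "finite ?A" "finite ?D"
    unfolding visible_ascending_eq visible_descending_eq by simp_all
  moreover have "card ?A = n - 1"
    unfolding visible_ascending_eq by (subst card_image) (auto simp: inj_on_def)
  moreover have "card ?D = n - 2"
    unfolding visible_descending_eq by (subst card_image) (auto simp: inj_on_def)
  ultimately show ?thesis using two_le_n card_Un_disjoint[of ?A ?D] by simp
qed

end

section \<open>Convex chains\<close>

definition lift_ends :: "nat \<Rightarrow> (nat \<Rightarrow> real) \<Rightarrow> nat \<Rightarrow> real" where
  "lift_ends n y i = (if i = 0 \<or> i = n - 1 then (\<Sum>k<n. \<bar>y k\<bar>) + 1 else y i)"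

lemma lift_ends_interior: "0 < i \<Longrightarrow> i < n - 1 \<Longrightarrow> lift_ends n y i = y i"
  by (simp add: lift_ends_def)

lemma lt_lift_ends_end:
  fixes y :: "nat \<Rightarrow> real"
  assumes "i < n"
  shows "y i < (\<Sum>k<n. \<bar>y k\<bar>) + 1"
proof -
  have "\<bar>y i\<bar> \<le> (\<Sum>k<n. \<bar>y k\<bar>)" using assms by (intro member_le_sum) auto
  then show ?thesis using abs_ge_self[of "y i"] by linarith
qed

lemma le_lift_ends: "i < n \<Longrightarrow> y i \<le> lift_ends n y i"
  using lt_lift_ends_end[of i n y] by (simp add: lift_ends_def)

lemma heights_lift_ends: "2 \<le> n \<Longrightarrow> heights n (lift_ends n y)"
  by unfold_locales (auto simp: lift_ends_def intro: lt_lift_ends_end)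

definition orient :: "pt \<Rightarrow> pt \<Rightarrow> pt \<Rightarrow> pt \<Rightarrow> pt \<Rightarrow> real" where
  "orient d e a b q = (b \<bullet> d - a \<bullet> d) * (q \<bullet> e - a \<bullet> e) - (b \<bullet> e - a \<bullet> e) * (q \<bullet> d - a \<bullet> d)"

lemma orient_affine:
  "orient d e a b ((1 - u) *\<^sub>R q + u *\<^sub>R r) = (1 - u) * orient d e a b q + u * orient d e a b r"
  unfolding orient_def by (simp add: inner_add_left algebra_simps)

lemma orient_ends [simp]: "orient d e a b a = 0" "orient d e a b b = 0"
  unfolding orient_def by simp_all

lemma orient_segment: "q \<in> closed_segment a b \<Longrightarrow> orient d e a b q = 0"
  by (auto simp: in_segment orient_affine)

lemma inner_segment_bounds:
  assumes "q \<in> closed_segment a b" "a \<bullet> d \<le> b \<bullet> d"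
  shows "a \<bullet> d \<le> q \<bullet> d" "q \<bullet> d \<le> b \<bullet> d"
proof -
  obtain u where u: "0 \<le> u" "u \<le> 1" "q = (1 - u) *\<^sub>R a + u *\<^sub>R b"
    using assms(1) by (auto simp: in_segment)
  have "q \<bullet> d = a \<bullet> d + u * (b \<bullet> d - a \<bullet> d)"
    unfolding u(3) by (simp add: inner_add_left algebra_simps)
  moreover have "0 \<le> u * (b \<bullet> d - a \<bullet> d)" "u * (b \<bullet> d - a \<bullet> d) \<le> b \<bullet> d - a \<bullet> d"
    using u assms(2) by (simp_all add: mult_left_le_one_le)
  ultimately show "a \<bullet> d \<le> q \<bullet> d" "q \<bullet> d \<le> b \<bullet> d" by linarith+
qed

(* In the coordinates x = (\<bullet> d) and y = (\<bullet> e) the points are sorted by x and each lies strictly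
   below every chord spanning it.  The edges join the pairs visible for the y-values with both ends
   lifted above all other points; the lifting makes the hull edge p 0 -- p (n - 1) one of them. *)
locale convex_chain =
  fixes p :: "nat \<Rightarrow> pt" and n :: nat and d e :: pt
  assumes n_ge_2: "2 \<le> n"
    and inner_d_strict_mono: "\<And>i j. i < j \<Longrightarrow> j < n \<Longrightarrow> p i \<bullet> d < p j \<bullet> d"
    and quadrant_acute: "\<And>w w'. 0 \<le> (w \<bullet> d) * (w' \<bullet> d) \<Longrightarrow> 0 \<le> (w \<bullet> e) * (w' \<bullet> e) \<Longrightarrow> 0 \<le> w \<bullet> w'"
    and below_chords: "\<And>i j k. i < j \<Longrightarrow> j < k \<Longrightarrow> k < n \<Longrightarrow> orient d e (p i) (p k) (p j) < 0"

sublocale convex_chain \<subseteq> heights n "lift_ends n (\<lambda>i. p i \<bullet> e)"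
  using n_ge_2 by (rule heights_lift_ends)

context convex_chain
begin

abbreviation x :: "nat \<Rightarrow> real" where "x i \<equiv> p i \<bullet> d"

abbreviation y :: "nat \<Rightarrow> real" where "y i \<equiv> p i \<bullet> e"

definition edges :: "pt set set" where
  "edges = (\<lambda>(i, j). {p i, p j}) ` {(i, j). visible i j}"

lemma inj_on_p: "inj_on p {..<n}"
  by (rule inj_onI) (metis lessThan_iff less_irrefl linorder_neqE_nat inner_d_strict_mono)

lemma y_lt_max:
  assumes "i < j" "j < k" "k < n"
  shows "y j < max (y i) (y k)"
proof (rule ccontr)
  assume "\<not> y j < max (y i) (y k)"
  then have y: "y i \<le> y j" "y k \<le> y j" by auto
  have x: "x i < x j" "x j < x k" using assms inner_d_strict_mono by auto
  have "(y k - y i) * (x j - x i) \<le> (y j - y i) * (x k - x i)"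
  proof (cases "y k \<le> y i")
    case True
    then have "(y k - y i) * (x j - x i) \<le> 0" using x by (simp add: mult_nonpos_nonneg)
    also have "0 \<le> (y j - y i) * (x k - x i)" using x y by simp
    finally show ?thesis .
  next
    case False
    have "(y k - y i) * (x j - x i) \<le> (y k - y i) * (x k - x i)"
      using False x by (intro mult_left_mono) auto
    also have "\<dots> \<le> (y j - y i) * (x k - x i)"
      using x y by (intro mult_right_mono) auto
    finally show ?thesis .
  qed
  then show False using below_chords[OF assms] by (simp add: orient_def algebra_simps)
qed

lemma lex_below_y_unimodal: "i < j \<Longrightarrow> j < k \<Longrightarrow> k < n \<Longrightarrow> lex_below y j i \<or> lex_below y j k"
  using y_lt_max[of i j k] by (auto simp: lex_below_def max_def split: if_splits)

lemma not_visibleE: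
  assumes "s < t" "t < n" "\<not> visible s t"
  obtains k where "s < k" "k < t" "lex_below y s k \<or> lex_below y t k"
proof -
  obtain k where k: "s < k" "k < t" "\<not> (lex_below (lift_ends n y) k s \<and> lex_below (lift_ends n y) k t)"
    using assms unfolding visible_def by auto
  have "lift_ends n y k = y k" using k assms by (intro lift_ends_interior) auto
  moreover have "y s \<le> lift_ends n y s" "y t \<le> lift_ends n y t"
    using assms le_lift_ends[of s n y] le_lift_ends[of t n y] by simp_all
  ultimately have "lex_below y s k \<or> lex_below y t k"
    using k lex_below_total[of k s] lex_below_total[of k t] lex_below_if_le_at[of y] by (metis less_irrefl)
  then show thesis using that k by blast
qed

lemma not_visible_step_down:
  assumes "s < t" "t < n" "\<not> visible s t" "lex_below y t s"
  shows "s + 1 < t" "lex_below y t (s + 1)" "lex_below y (s + 1) s"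
proof -
  show "s + 1 < t" using assms visible_Suc by (metis Suc_eq_plus1 Suc_lessI)
  obtain k where k: "s < k" "k < t" "lex_below y s k \<or> lex_below y t k"
    using not_visibleE[OF assms(1-3)] .
  then have tk: "lex_below y t k" using assms(4) lex_below_trans by blast
  show t_s1: "lex_below y t (s + 1)"
  proof (cases "s + 1 = k")
    case False
    then have "lex_below y k (s + 1) \<or> lex_below y k t"
      using lex_below_y_unimodal[of "s + 1" k t] k assms(2) by simp
    then show ?thesis using tk lex_below_asym lex_below_trans by blast
  qed (use tk in simp)
  have "lex_below y (s + 1) s \<or> lex_below y (s + 1) t"
    using lex_below_y_unimodal[of s "s + 1" t] \<open>s + 1 < t\<close> assms(2) by simp
  then show "lex_below y (s + 1) s" using t_s1 lex_below_asym by blast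
qed

lemma not_visible_step_up:
  assumes "s < t" "t < n" "\<not> visible s t" "lex_below y s t"
  shows "s < t - 1" "lex_below y s (t - 1)" "lex_below y (t - 1) t"
proof -
  show "s < t - 1" using assms visible_Suc by (metis Suc_eq_plus1 Suc_lessI less_diff_conv)
  obtain k where k: "s < k" "k < t" "lex_below y s k \<or> lex_below y t k"
    using not_visibleE[OF assms(1-3)] .
  then have sk: "lex_below y s k" using assms(4) lex_below_trans by blast
  show s_t1: "lex_below y s (t - 1)"
  proof (cases "t - 1 = k")
    case False
    then have "lex_below y k s \<or> lex_below y k (t - 1)"
      using lex_below_y_unimodal[of s k "t - 1"] k assms(2) by simp
    then show ?thesis using sk lex_below_asym lex_below_trans by blast
  qed (use sk in simp)
  have "lex_below y (t - 1) s \<or> lex_below y (t - 1) t"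
    using lex_below_y_unimodal[of s "t - 1" t] \<open>s < t - 1\<close> assms(2) by simp
  then show "lex_below y (t - 1) t" using s_t1 lex_below_asym by blast
qed

lemma visible_path_down:
  "s < t \<Longrightarrow> t < n \<Longrightarrow> lex_below y t s \<Longrightarrow>
   \<exists>ks. ks \<noteq> [] \<and> hd ks = s \<and> last ks = t \<and> successively (\<lambda>a b. visible a b \<and> y b \<le> y a) ks"
proof (induction "t - s" arbitrary: s rule: less_induct)
  case less
  show ?case
  proof (cases "visible s t")
    case True
    then show ?thesis using less.prems by (intro exI[of _ "[s, t]"]) (auto simp: lex_below_def)
  next
    case False
    note step = not_visible_step_down[OF less.prems(1,2) False less.prems(3)]
    have "t - (s + 1) < t - s" using less.prems(1) by simp
    then obtain ks where "ks \<noteq> []" "hd ks = s + 1" "last ks = t"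
      and "successively (\<lambda>a b. visible a b \<and> y b \<le> y a) ks"
      using less.hyps[of "s + 1"] step less.prems(2) by blast
    moreover have "visible s (s + 1) \<and> y (s + 1) \<le> y s"
      using visible_Suc step less.prems(2) by (auto simp: lex_below_def)
    ultimately show ?thesis
      by (intro exI[of _ "s # ks"]) (auto simp: successively_Cons hd_conv_nth)
  qed
qed

lemma visible_path_up:
  "s < t \<Longrightarrow> t < n \<Longrightarrow> lex_below y s t \<Longrightarrow>
   \<exists>ks. ks \<noteq> [] \<and> hd ks = s \<and> last ks = t \<and> successively (\<lambda>a b. visible a b \<and> y a \<le> y b) ks"
proof (induction "t - s" arbitrary: t rule: less_induct)
  case less
  show ?case
  proof (cases "visible s t")
    case True
    then show ?thesis using less.prems by (intro exI[of _ "[s, t]"]) (auto simp: lex_below_def)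
  next
    case False
    note step = not_visible_step_up[OF less.prems(1,2) False less.prems(3)]
    have "t - 1 - s < t - s" "t - 1 < n" using step(1) less.prems(2) by simp_all
    then obtain ks where "ks \<noteq> []" "hd ks = s" "last ks = t - 1"
      and "successively (\<lambda>a b. visible a b \<and> y a \<le> y b) ks"
      using less.hyps[of "t - 1"] step by blast
    moreover have "visible (t - 1) t \<and> y (t - 1) \<le> y t"
      using visible_Suc[of "t - 1"] step less.prems(2) by (auto simp: lex_below_def)
    ultimately show ?thesis
      by (intro exI[of _ "ks @ [t]"]) (auto simp: successively_append_iff)
  qed
qed

lemma quadrant_acute_signed:
  assumes "u1 = d \<or> u1 = - d" "u2 = e \<or> u2 = - e"
    and "0 \<le> w \<bullet> u1" "0 \<le> w \<bullet> u2" "0 \<le> w' \<bullet> u1" "0 \<le> w' \<bullet> u2"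
  shows "0 \<le> w \<bullet> w'"
proof (rule quadrant_acute)
  have "(w \<bullet> d) * (w' \<bullet> d) = (w \<bullet> u1) * (w' \<bullet> u1)" "(w \<bullet> e) * (w' \<bullet> e) = (w \<bullet> u2) * (w' \<bullet> u2)"
    using assms(1,2) by auto
  then show "0 \<le> (w \<bullet> d) * (w' \<bullet> d)" "0 \<le> (w \<bullet> e) * (w' \<bullet> e)" using assms(3-6) by simp_all
qed

lemma increasing_chord_path:
  assumes ne: "ks \<noteq> []" and path: "successively visible ks"
    and y_mono: "successively (\<lambda>a b. y a \<le> y b) ks \<or> successively (\<lambda>a b. y b \<le> y a) ks"
  shows "graph_path edges (map p ks) \<and> self_approaching (map p ks) \<and> self_approaching (rev (map p ks))"
proof -
  have "successively (\<lambda>a b. x a < x b) ks"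
    using path by (rule successively_mono) (simp add: visible_def inner_d_strict_mono)
  then have "sorted_wrt (<) (map (\<lambda>v. v \<bullet> d) (map p ks))"
    by (simp add: successively_map successively_conv_sorted_wrt[symmetric] transp_def)
  then have d_sorted: "sorted (map (\<lambda>v. v \<bullet> d) (map p ks))" and "distinct (map p ks)"
    using distinct_map[of "\<lambda>v. v \<bullet> d" "map p ks"] by (simp_all only: strict_sorted_iff)
  obtain u2 where u2: "u2 = e \<or> u2 = - e" and e_sorted: "sorted (map (\<lambda>v. v \<bullet> u2) (map p ks))"
    using y_mono
  proof
    assume "successively (\<lambda>a b. y a \<le> y b) ks"
    then show thesis by (intro that[of e]) (simp_all add: sorted_map_iff_successively successively_map)
  next
    assume "successively (\<lambda>a b. y b \<le> y a) ks"
    then show thesis by (intro that[of "- e"]) (simp_all add: sorted_map_iff_successively successively_map)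
  qed
  have "graph_path edges (map p ks)"
    unfolding graph_path_def
  proof (intro conjI allI impI)
    fix i assume i: "i + 1 < length (map p ks)"
    then have "visible (ks ! i) (ks ! (i + 1))" using successively_nth[OF path, of i] by simp
    then show "{map p ks ! i, map p ks ! (i + 1)} \<in> edges" using i unfolding edges_def by force
  qed (use ne \<open>distinct (map p ks)\<close> in simp_all)
  moreover have "self_approaching (map p ks)"
    using ne d_sorted e_sorted quadrant_acute_signed[OF _ u2]
    by (intro self_approaching_if_sorted_inner[of _ d u2]) auto
  moreover have "self_approaching (rev (map p ks))"
    using ne sorted_inner_rev[OF d_sorted] sorted_inner_rev[OF e_sorted]
      quadrant_acute_signed[of "- d" "- u2"] u2
    by (intro self_approaching_if_sorted_inner[of _ "- d" "- u2"]) auto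
  ultimately show ?thesis by blast
qed

lemma increasing_chord_path_between:
  assumes "s < t" "t < n"
  obtains vs where "graph_path edges vs" "hd vs = p s" "last vs = p t"
    "self_approaching vs" "self_approaching (rev vs)"
proof -
  obtain ks where ks: "ks \<noteq> []" "hd ks = s" "last ks = t" "successively visible ks"
    "successively (\<lambda>a b. y a \<le> y b) ks \<or> successively (\<lambda>a b. y b \<le> y a) ks"
  proof (cases "lex_below y s t")
    case True
    then show thesis
      using visible_path_up[OF assms] that by (metis (no_types, lifting) successively_mono)
  next
    case False
    then have "lex_below y t s" using lex_below_total assms(1) by (metis less_irrefl)
    then show thesis
      using visible_path_down[OF assms] that by (metis (no_types, lifting) successively_mono)
  qed
  then show thesis
    using increasing_chord_path[OF ks(1,4,5)] that[of "map p ks"] ks(1-3) by (simp add: hd_map last_map)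
qed

lemma increasing_chord_edges: "increasing_chord (p ` {..<n}) edges"
  unfolding increasing_chord_def
proof (intro ballI)
  fix u v assume "u \<in> p ` {..<n}" "v \<in> p ` {..<n}"
  then obtain s t where st: "s < n" "t < n" "u = p s" "v = p t" by auto
  consider "s = t" | "s < t" | "t < s" by linarith
  then show "\<exists>vs. graph_path edges vs \<and> hd vs = u \<and> last vs = v \<and>
      self_approaching vs \<and> self_approaching (rev vs)"
  proof cases
    case 1
    then show ?thesis
      by (intro exI[of _ "[u]"]) (use st in \<open>auto simp: graph_path_def self_approaching_singleton\<close>)
  next
    case 2
    then show ?thesis using increasing_chord_path_between[of s t] st by metis
  next
    case 3
    then obtain vs where vs: "graph_path edges vs" "hd vs = p t" "last vs = p s"
      "self_approaching vs" "self_approaching (rev vs)"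
      using increasing_chord_path_between[of t s] st by metis
    then have "vs \<noteq> []" unfolding graph_path_def by simp
    then show ?thesis using vs st graph_path_rev[OF vs(1)]
      by (intro exI[of _ "rev vs"]) (auto simp: hd_rev last_rev)
  qed
qed

lemma geometric_graph_edges: "geometric_graph (p ` {..<n}) edges"
  unfolding geometric_graph_def edges_def
proof clarify
  fix i j assume "visible i j"
  then have "i < j" "j < n" unfolding visible_def by auto
  then have "p i \<noteq> p j" using inj_on_p by (auto dest: inj_onD)
  then show "{p i, p j} \<subseteq> p ` {..<n} \<and> card {p i, p j} = 2" using \<open>i < j\<close> \<open>j < n\<close> by auto
qed

lemma card_edges: "card edges = 2 * n - 3"
proof -
  have "inj_on (\<lambda>(i, j). {p i, p j}) {(i, j). visible i j}"
  proof (rule inj_onI, clarify)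
    fix i j i' j' assume "visible i j" "visible i' j'" "{p i, p j} = {p i', p j'}"
    moreover have "x i < x j" "x i' < x j'"
      using \<open>visible i j\<close> \<open>visible i' j'\<close> inner_d_strict_mono unfolding visible_def by auto
    ultimately have "p i = p i' \<and> p j = p j'" by (auto simp: doubleton_eq_iff)
    then show "i = i' \<and> j = j'"
      using \<open>visible i j\<close> \<open>visible i' j'\<close> inj_on_p unfolding visible_def
      by (metis inj_onD lessThan_iff order.strict_trans)
  qed
  then show ?thesis unfolding edges_def using card_visible by (simp add: card_image)
qed

lemma segments_nested_meet_at_ends:
  assumes "i \<le> k" "k < l" "l \<le> j" "j < n" "(i, j) \<noteq> (k, l)"
    and q: "q \<in> closed_segment (p i) (p j)" "q \<in> closed_segment (p k) (p l)"
  shows "q \<in> {p i, p j} \<inter> {p k, p l}"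
proof -
  obtain u where u: "0 \<le> u" "u \<le> 1" "q = (1 - u) *\<^sub>R p k + u *\<^sub>R p l"
    using q(2) by (auto simp: in_segment)
  let ?o = "orient d e (p i) (p j)"
  have sum0: "(1 - u) * ?o (p k) + u * ?o (p l) = 0"
    using orient_segment[OF q(1)] u(3) orient_affine by simp
  consider "k = i" | "i < k" "l = j" | "i < k" "l < j" using assms by linarith
  then show ?thesis
  proof cases
    case 1
    then have "?o (p l) < 0" using assms below_chords by simp
    then have "u = 0" using sum0 1 by simp
    then show ?thesis using u 1 by simp
  next
    case 2
    then have "?o (p k) < 0" using assms below_chords by simp
    then have "u = 1" using sum0 2 by simp
    then show ?thesis using u 2 by simp
  next
    case 3
    then have neg: "?o (p k) < 0" "?o (p l) < 0" using assms below_chords by simp_all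
    then have "(1 - u) * ?o (p k) \<le> 0" "u * ?o (p l) \<le> 0"
      using u by (simp_all add: mult_nonneg_nonpos)
    then have "(1 - u) * ?o (p k) = 0" "u * ?o (p l) = 0" using sum0 by linarith+
    then show ?thesis using neg by simp
  qed
qed

lemma segments_successive_meet_at_ends:
  assumes "i < j" "j \<le> k" "k < l" "l < n"
    and q: "q \<in> closed_segment (p i) (p j)" "q \<in> closed_segment (p k) (p l)"
  shows "q \<in> {p i, p j} \<inter> {p k, p l}"
proof -
  have "x i < x j" "x k < x l" "j < k \<Longrightarrow> x j < x k" using assms inner_d_strict_mono by auto
  then have "q \<bullet> d \<le> x j" "x k \<le> q \<bullet> d"
    using inner_segment_bounds[OF q(1)] inner_segment_bounds[OF q(2)] by simp_all
  then have "j = k" "q \<bullet> d = x j" using \<open>j < k \<Longrightarrow> x j < x k\<close> assms(2) by force+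
  obtain u where u: "0 \<le> u" "u \<le> 1" "q = (1 - u) *\<^sub>R p i + u *\<^sub>R p j"
    using q(1) by (auto simp: in_segment)
  have "q \<bullet> d = x j - (1 - u) * (x j - x i)" unfolding u(3) by (simp add: inner_add_left algebra_simps)
  then have "u = 1" using \<open>q \<bullet> d = x j\<close> \<open>x i < x j\<close> by simp
  then show ?thesis using u \<open>j = k\<close> by simp
qed

lemma segments_meet_at_ends:
  assumes "i < j" "j < n" "k < l" "l < n" "(i, j) \<noteq> (k, l)"
    and "\<not> (i < k \<and> k < j \<and> j < l)" "\<not> (k < i \<and> i < l \<and> l < j)"
  shows "closed_segment (p i) (p j) \<inter> closed_segment (p k) (p l) \<subseteq> {p i, p j} \<inter> {p k, p l}"
proof
  fix q assume q: "q \<in> closed_segment (p i) (p j) \<inter> closed_segment (p k) (p l)"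
  consider "j \<le> k" | "l \<le> i" | "i \<le> k" "l \<le> j" | "k \<le> i" "j \<le> l" using assms by linarith
  then show "q \<in> {p i, p j} \<inter> {p k, p l}"
  proof cases
    case 1
    then show ?thesis using segments_successive_meet_at_ends[of i j k l q] assms q by blast
  next
    case 2
    then show ?thesis using segments_successive_meet_at_ends[of k l i j q] assms q by blast
  next
    case 3
    then show ?thesis using segments_nested_meet_at_ends[of i k l j q] assms q by blast
  next
    case 4
    then show ?thesis using segments_nested_meet_at_ends[of k i j l q] assms q by blast
  qed
qed

lemma planar_edges: "planar_gg edges"
  unfolding planar_gg_def
proof (intro ballI impI)
  fix e1 e2 assume e: "e1 \<in> edges" "e2 \<in> edges" "e1 \<noteq> e2"
  obtain i j where ij: "e1 = {p i, p j}" "visible i j" using e(1) unfolding edges_def by auto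
  obtain k l where kl: "e2 = {p k, p l}" "visible k l" using e(2) unfolding edges_def by auto
  have "edge_seg {a, b} = closed_segment a b" for a b
    unfolding edge_seg_def by (auto simp: closed_segment_commute)
  moreover have "closed_segment (p i) (p j) \<inter> closed_segment (p k) (p l) \<subseteq> {p i, p j} \<inter> {p k, p l}"
  proof (rule segments_meet_at_ends)
    show "i < j" "j < n" "k < l" "l < n" using ij(2) kl(2) unfolding visible_def by auto
    show "(i, j) \<noteq> (k, l)" using e(3) unfolding ij(1) kl(1) by auto
    show "\<not> (i < k \<and> k < j \<and> j < l)" using visible_not_crossing[OF ij(2) kl(2)] by blast
    show "\<not> (k < i \<and> i < l \<and> l < j)" using visible_not_crossing[OF kl(2) ij(2)] by blast
  qed
  ultimately show "edge_seg e1 \<inter> edge_seg e2 \<subseteq> e1 \<inter> e2" unfolding ij(1) kl(1) by simp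
qed

end

section \<open>One-sided convex point sets are convex chains\<close>

lemma obtain_enumeration_sorted_by:
  fixes f :: "'a \<Rightarrow> 'b::linorder"
  assumes "finite A" "inj_on f A"
  obtains p where "p ` {..<card A} = A" "\<And>i j. i < j \<Longrightarrow> j < card A \<Longrightarrow> f (p i) < f (p j)"
proof -
  interpret folding_insort_key "(\<le>)" "(<)" A f by unfold_locales (rule assms(2))
  define xs where "xs = linorder.sorted_key_list_of_set (\<le>) f A"
  have "set xs = A" "length xs = card A"
    unfolding xs_def using set_sorted_key_list_of_set[OF subset_refl assms(1)]
      length_sorted_key_list_of_set[OF subset_refl] by simp_all
  moreover have "sorted_wrt (<) (map f xs)"
    unfolding xs_def strict_sorted_iff
    using sorted_sorted_key_list_of_set[OF subset_refl] distinct_sorted_key_list_of_set[OF subset_refl]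
    by simp
  ultimately show thesis
    by (intro that[of "(!) xs"]) (auto simp: set_conv_nth sorted_wrt_iff_nth_less)
qed

lemma supporting_hyperplane_frontier:
  fixes C :: "'a::euclidean_space set"
  assumes cv: "convex C" and cl: "closed C" and m: "m \<in> frontier C"
  obtains \<nu> where "\<nu> \<noteq> 0" "\<And>q. q \<in> C \<Longrightarrow> \<nu> \<bullet> q \<le> \<nu> \<bullet> m"
proof (cases "interior C = {}")
  case True
  then obtain \<nu> c where \<nu>: "\<nu> \<noteq> 0" "C \<subseteq> {x. \<nu> \<bullet> x = c}"
    using empty_interior_subset_hyperplane[OF cv] by metis
  moreover have "m \<in> C" using m cl by (simp add: frontier_def)
  ultimately have "\<nu> \<bullet> q \<le> \<nu> \<bullet> m" if "q \<in> C" for q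
    using that \<nu>(2) by (metis (mono_tags) mem_Collect_eq order_refl subsetD)
  then show thesis using that \<nu>(1) by blast
next
  case False
  have "m \<notin> interior C" using m by (simp add: frontier_def)
  then obtain \<nu> c where "\<nu> \<noteq> 0" and int: "\<forall>x\<in>interior C. \<nu> \<bullet> x \<le> c" and "\<forall>x\<in>{m}. c \<le> \<nu> \<bullet> x"
    using separating_hyperplane_sets[of "interior C" "{m}"] False cv convex_interior by blast
  have "closure (interior C) \<subseteq> {x. \<nu> \<bullet> x \<le> c}"
    by (rule closure_minimal) (use int closed_halfspace_le in auto)
  then have "C \<subseteq> {x. \<nu> \<bullet> x \<le> c}" using convex_closure_interior[OF cv False] cl by simp
  then have "\<nu> \<bullet> q \<le> \<nu> \<bullet> m" if "q \<in> C" for q using that \<open>\<forall>x\<in>{m}. c \<le> \<nu> \<bullet> x\<close> by auto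
  then show thesis using that \<open>\<nu> \<noteq> 0\<close> by blast
qed

lemma supporting_hyperplane_frontier_segment:
  fixes P :: "'a::euclidean_space set"
  assumes "finite P" "a \<in> P" "b \<in> P" "closed_segment a b \<subseteq> frontier (convex hull P)"
  obtains \<nu> where "\<nu> \<noteq> 0" "\<And>q. q \<in> P \<Longrightarrow> \<nu> \<bullet> q \<le> \<nu> \<bullet> a" "\<nu> \<bullet> b = \<nu> \<bullet> a"
proof -
  have "midpoint a b \<in> frontier (convex hull P)" using assms(4) midpoint_in_closed_segment by blast
  moreover have "closed (convex hull P)"
    using assms(1) by (simp add: compact_imp_closed finite_imp_compact_convex_hull)
  ultimately obtain \<nu> where \<nu>: "\<nu> \<noteq> 0" "\<And>q. q \<in> convex hull P \<Longrightarrow> \<nu> \<bullet> q \<le> \<nu> \<bullet> midpoint a b"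
    using supporting_hyperplane_frontier[of "convex hull P"] convex_convex_hull by blast
  have le: "\<nu> \<bullet> q \<le> (\<nu> \<bullet> a + \<nu> \<bullet> b) / 2" if "q \<in> P" for q
    using \<nu>(2)[OF hull_inc[OF that]] by (simp add: midpoint_def inner_add_right)
  have "\<nu> \<bullet> b = \<nu> \<bullet> a" using le[OF assms(2)] le[OF assms(3)] by simp
  moreover have "\<nu> \<bullet> q \<le> \<nu> \<bullet> a" if "q \<in> P" for q using le[OF that] calculation by simp
  ultimately show thesis using that \<nu>(1) by blast
qed

lemma orient_supporting_line:
  assumes "\<nu> \<bullet> b = \<nu> \<bullet> a"
  shows "orient d ((\<nu> \<bullet> rot d) *\<^sub>R rot d) a b v = (b \<bullet> d - a \<bullet> d) * ((d \<bullet> d) * (\<nu> \<bullet> v - \<nu> \<bullet> a))"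
proof -
  define \<alpha> where "\<alpha> = \<nu> \<bullet> d"
  define \<beta> where "\<beta> = \<nu> \<bullet> rot d"
  have v: "(d \<bullet> d) * (\<nu> \<bullet> v - \<nu> \<bullet> a) = \<alpha> * (v \<bullet> d - a \<bullet> d) + \<beta> * (v \<bullet> rot d - a \<bullet> rot d)"
    using inner_rot_decomp[of d \<nu> "v - a"] unfolding \<alpha>_def \<beta>_def
    by (simp add: inner_diff_left inner_diff_right)
  have b: "0 = \<alpha> * (b \<bullet> d - a \<bullet> d) + \<beta> * (b \<bullet> rot d - a \<bullet> rot d)"
    using inner_rot_decomp[of d \<nu> "b - a"] assms unfolding \<alpha>_def \<beta>_def
    by (simp add: inner_diff_left inner_diff_right)
  have ring: "X * (\<beta> * R) - \<beta> * S * Y = X * (\<alpha> * Y + \<beta> * R) - Y * (\<alpha> * X + \<beta> * S)"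
    for X Y R S :: real
    by (simp add: algebra_simps)
  have "orient d (\<beta> *\<^sub>R rot d) a b v = (b \<bullet> d - a \<bullet> d) * (\<beta> * (v \<bullet> rot d - a \<bullet> rot d))
      - \<beta> * (b \<bullet> rot d - a \<bullet> rot d) * (v \<bullet> d - a \<bullet> d)"
    unfolding orient_def by (simp add: right_diff_distrib)
  also have "\<dots> = (b \<bullet> d - a \<bullet> d) * ((d \<bullet> d) * (\<nu> \<bullet> v - \<nu> \<bullet> a))"
    unfolding ring v[symmetric] b[symmetric] by simp
  finally show ?thesis unfolding \<beta>_def .
qed

lemma orient_vertical:
  fixes q v :: pt
  assumes "q \<in> closed_segment a b" "q \<bullet> d = v \<bullet> d"
  shows "orient d e a b v = (b \<bullet> d - a \<bullet> d) * (v \<bullet> e - q \<bullet> e)"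
proof -
  have "orient d e a b v = orient d e a b v - orient d e a b q"
    using orient_segment[OF assms(1)] by simp
  also have "\<dots> = (b \<bullet> d - a \<bullet> d) * (v \<bullet> e - q \<bullet> e)"
    unfolding orient_def using assms(2) by (simp add: algebra_simps)
  finally show ?thesis .
qed

lemma segment_point_at_inner:
  fixes a b d :: "'a::real_inner"
  assumes "a \<bullet> d < b \<bullet> d" "a \<bullet> d \<le> t" "t \<le> b \<bullet> d"
  obtains q where "q \<in> closed_segment a b" "q \<bullet> d = t"
proof
  define u where "u = (t - a \<bullet> d) / (b \<bullet> d - a \<bullet> d)"
  have u: "0 \<le> u" "u \<le> 1" "u * (b \<bullet> d - a \<bullet> d) = t - a \<bullet> d"
    using assms unfolding u_def by (simp_all add: divide_le_eq_1)
  show "(1 - u) *\<^sub>R a + u *\<^sub>R b \<in> closed_segment a b" using u by (auto simp: in_segment)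
  show "((1 - u) *\<^sub>R a + u *\<^sub>R b) \<bullet> d = t"
    using u(3) by (simp add: inner_add_left algebra_simps)
qed

lemma vertical_mem_segment:
  fixes s t w :: "'a::real_inner"
  assumes "s \<bullet> d = w \<bullet> d" "t \<bullet> d = w \<bullet> d" "s \<bullet> e \<le> w \<bullet> e" "w \<bullet> e \<le> t \<bullet> e"
    and eq: "\<And>u v. u \<bullet> d = v \<bullet> d \<Longrightarrow> u \<bullet> e = v \<bullet> e \<Longrightarrow> u = v"
  shows "w \<in> closed_segment s t"
proof (cases "s \<bullet> e = t \<bullet> e")
  case True
  then have "w = s" using assms by (intro eq) auto
  then show ?thesis by simp
next
  case False
  define u where "u = (w \<bullet> e - s \<bullet> e) / (t \<bullet> e - s \<bullet> e)"
  have u: "0 \<le> u" "u \<le> 1" "u * (t \<bullet> e - s \<bullet> e) = w \<bullet> e - s \<bullet> e"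
    using assms(3,4) False unfolding u_def by (simp_all add: divide_le_eq_1)
  have "(1 - u) *\<^sub>R s + u *\<^sub>R t = w"
    using u(3) assms(1,2) by (intro eq) (simp_all add: inner_add_left algebra_simps)
  then show ?thesis using u(1,2) by (auto simp: in_segment)
qed

(* The vertical line through p2 meets the chord [p1, p3] below p2 and the segment [a, b] above it. *)
lemma mem_convex_hull_between:
  fixes p1 p2 p3 :: pt
  assumes "a \<bullet> d \<le> p1 \<bullet> d" "p1 \<bullet> d < p2 \<bullet> d" "p2 \<bullet> d < p3 \<bullet> d" "p3 \<bullet> d \<le> b \<bullet> d"
    and "orient d e a b p2 \<le> 0" "0 \<le> orient d e p1 p3 p2"
    and eq: "\<And>u v. u \<bullet> d = v \<bullet> d \<Longrightarrow> u \<bullet> e = v \<bullet> e \<Longrightarrow> u = v"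
  shows "p2 \<in> convex hull {p1, p3, a, b}"
proof -
  obtain s where s: "s \<in> closed_segment p1 p3" "s \<bullet> d = p2 \<bullet> d"
    using segment_point_at_inner[of p1 d p3 "p2 \<bullet> d"] assms(2,3) by auto
  obtain t where t: "t \<in> closed_segment a b" "t \<bullet> d = p2 \<bullet> d"
    using segment_point_at_inner[of a d b "p2 \<bullet> d"] assms(1-4) by auto
  have "0 \<le> (p3 \<bullet> d - p1 \<bullet> d) * (p2 \<bullet> e - s \<bullet> e)" using orient_vertical[OF s] assms(6) by simp
  then have "s \<bullet> e \<le> p2 \<bullet> e" using assms(2,3) by (simp add: zero_le_mult_iff)
  moreover have "(b \<bullet> d - a \<bullet> d) * (p2 \<bullet> e - t \<bullet> e) \<le> 0" using orient_vertical[OF t] assms(5) by simp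
  then have "p2 \<bullet> e \<le> t \<bullet> e" using assms(1-4) by (simp add: mult_le_0_iff)
  ultimately have "p2 \<in> closed_segment s t" using s(2) t(2) eq by (intro vertical_mem_segment) auto
  moreover have "closed_segment p1 p3 \<subseteq> convex hull {p1, p3, a, b}"
    "closed_segment a b \<subseteq> convex hull {p1, p3, a, b}"
    by (simp_all add: closed_segment_subset hull_inc)
  then have "closed_segment s t \<subseteq> convex hull {p1, p3, a, b}"
    using s(1) t(1) by (intro closed_segment_subset) auto
  ultimately show ?thesis by blast
qed

lemma orient_neg_if_convex_point_set:
  assumes cps: "convex_point_set P" and ab: "a \<in> P" "b \<in> P"
    and ext: "\<And>q. q \<in> P \<Longrightarrow> a \<bullet> d \<le> q \<bullet> d \<and> q \<bullet> d \<le> b \<bullet> d"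
    and below: "\<And>v. v \<in> P \<Longrightarrow> orient d e a b v \<le> 0"
    and eq: "\<And>u v. u \<bullet> d = v \<bullet> d \<Longrightarrow> u \<bullet> e = v \<bullet> e \<Longrightarrow> u = v"
    and P: "p1 \<in> P" "p2 \<in> P" "p3 \<in> P" and d: "p1 \<bullet> d < p2 \<bullet> d" "p2 \<bullet> d < p3 \<bullet> d"
  shows "orient d e p1 p3 p2 < 0"
proof (rule ccontr)
  assume "\<not> orient d e p1 p3 p2 < 0"
  moreover have "a \<bullet> d \<le> p1 \<bullet> d" "p3 \<bullet> d \<le> b \<bullet> d" using ext P by blast+
  ultimately have "p2 \<in> convex hull {p1, p3, a, b}"
    using below[OF P(2)] d by (intro mem_convex_hull_between[where d = d and e = e] eq) auto
  moreover have "{p1, p3, a, b} \<subseteq> P - {p2}"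
    using P ab d \<open>a \<bullet> d \<le> p1 \<bullet> d\<close> \<open>p3 \<bullet> d \<le> b \<bullet> d\<close> by auto
  ultimately have "p2 \<in> convex hull (P - {p2})" using hull_mono by blast
  then show False using cps P(2) unfolding convex_point_set_def by blast
qed

(* e is the normal of a supporting line through the hull edge [a, b], projected onto rot d. *)
lemma supporting_coordinate_frame:
  assumes "finite P" "a \<in> P" "b \<in> P" "closed_segment a b \<subseteq> frontier (convex hull P)"
    and "a \<bullet> d < b \<bullet> d"
  obtains e where "\<And>v. v \<in> P \<Longrightarrow> orient d e a b v \<le> 0"
    and "\<And>w w'. 0 \<le> (w \<bullet> d) * (w' \<bullet> d) \<Longrightarrow> 0 \<le> (w \<bullet> e) * (w' \<bullet> e) \<Longrightarrow> 0 \<le> w \<bullet> w'"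
    and "\<And>u v. u \<bullet> d = v \<bullet> d \<Longrightarrow> u \<bullet> e = v \<bullet> e \<Longrightarrow> u = v"
proof -
  obtain \<nu> where \<nu>: "\<nu> \<noteq> 0" "\<And>q. q \<in> P \<Longrightarrow> \<nu> \<bullet> q \<le> \<nu> \<bullet> a" "\<nu> \<bullet> b = \<nu> \<bullet> a"
    using supporting_hyperplane_frontier_segment[OF assms(1-4)] by blast
  have "d \<noteq> 0" using assms(5) by auto
  define e where "e = (\<nu> \<bullet> rot d) *\<^sub>R rot d"
  have "\<nu> \<bullet> rot d \<noteq> 0"
  proof
    assume "\<nu> \<bullet> rot d = 0"
    then have "(\<nu> \<bullet> d) * (b \<bullet> d - a \<bullet> d) = 0"
      using inner_rot_decomp[of d \<nu> "b - a"] \<nu>(3) by (simp add: inner_diff_left inner_diff_right)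
    then have "(d \<bullet> d) * (\<nu> \<bullet> \<nu>) = 0"
      using inner_rot_decomp[of d \<nu> \<nu>] \<open>\<nu> \<bullet> rot d = 0\<close> assms(5) by simp
    then show False using \<open>d \<noteq> 0\<close> \<nu>(1) by simp
  qed
  show thesis
  proof (rule that)
    fix v assume "v \<in> P"
    then show "orient d e a b v \<le> 0"
      unfolding e_def orient_supporting_line[OF \<nu>(3)] using \<nu>(2) assms(5)
      by (simp add: mult_nonneg_nonpos)
  next
    fix w w' :: pt
    assume "0 \<le> (w \<bullet> d) * (w' \<bullet> d)" "0 \<le> (w \<bullet> e) * (w' \<bullet> e)"
    then show "0 \<le> w \<bullet> w'"
      using inner_nonneg_if_same_quadrant[OF \<open>d \<noteq> 0\<close> \<open>\<nu> \<bullet> rot d \<noteq> 0\<close>] unfolding e_def by blast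
  next
    fix u v :: pt
    assume "u \<bullet> d = v \<bullet> d" "u \<bullet> e = v \<bullet> e"
    then show "u = v"
      using eq_if_inner_eq_rot[OF \<open>d \<noteq> 0\<close>] \<open>\<nu> \<bullet> rot d \<noteq> 0\<close> unfolding e_def by simp
  qed
qed

lemma one_sided_convex_obtain_convex_chain:
  assumes "one_sided_convex P" "2 \<le> card P"
  obtains p d e where "convex_chain p (card P) d e" "p ` {..<card P} = P"
proof -
  obtain d where gen: "generic_direction P d" and os: "one_sided_wrt P d"
    and cps: "convex_point_set P"
    using assms(1) unfolding one_sided_convex_def by blast
  have fin: "finite P" using cps unfolding convex_point_set_def by blast
  have inj: "inj_on (\<lambda>q. q \<bullet> d) P"
    using gen unfolding generic_direction_def by (intro inj_onI) (auto simp: inner_diff_left)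
  obtain a b where ab: "a \<in> P" "b \<in> P" and ext: "\<And>q. q \<in> P \<Longrightarrow> a \<bullet> d \<le> q \<bullet> d \<and> q \<bullet> d \<le> b \<bullet> d"
    and fr: "closed_segment a b \<subseteq> frontier (convex hull P)"
    using os unfolding one_sided_wrt_def by blast
  have "a \<bullet> d < b \<bullet> d"
  proof -
    have "\<not> P \<subseteq> {a}" using assms(2) card_mono[of "{a}" P] by auto
    then obtain q where "q \<in> P" "q \<noteq> a" by blast
    then have "a \<bullet> d \<noteq> q \<bullet> d" using inj ab(1) by (auto dest: inj_onD)
    then show ?thesis using ext[OF \<open>q \<in> P\<close>] by linarith
  qed
  then obtain e where below: "\<And>v. v \<in> P \<Longrightarrow> orient d e a b v \<le> 0"
    and acute: "\<And>w w'. 0 \<le> (w \<bullet> d) * (w' \<bullet> d) \<Longrightarrow> 0 \<le> (w \<bullet> e) * (w' \<bullet> e) \<Longrightarrow> 0 \<le> w \<bullet> w'"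
    and eq: "\<And>u v. u \<bullet> d = v \<bullet> d \<Longrightarrow> u \<bullet> e = v \<bullet> e \<Longrightarrow> u = v"
    using supporting_coordinate_frame[OF fin ab fr] by blast
  obtain p where p: "p ` {..<card P} = P"
    and sorted: "\<And>i j. i < j \<Longrightarrow> j < card P \<Longrightarrow> p i \<bullet> d < p j \<bullet> d"
    using obtain_enumeration_sorted_by[OF fin inj] by blast
  have "convex_chain p (card P) d e"
  proof
    show "2 \<le> card P" by (rule assms(2))
    show "p i \<bullet> d < p j \<bullet> d" if "i < j" "j < card P" for i j using sorted that .
    show "0 \<le> w \<bullet> w'" if "0 \<le> (w \<bullet> d) * (w' \<bullet> d)" "0 \<le> (w \<bullet> e) * (w' \<bullet> e)" for w w'
      using acute that .
    fix i j k assume "i < j" "j < k" "k < card P"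
    then have "p i \<in> P" "p j \<in> P" "p k \<in> P" "p i \<bullet> d < p j \<bullet> d" "p j \<bullet> d < p k \<bullet> d"
      using p sorted by auto
    then show "orient d e (p i) (p k) (p j) < 0"
      using orient_neg_if_convex_point_set[where d = d and e = e, OF cps ab ext below eq] by blast
  qed
  then show thesis using that p by blast
qed

theorem lemma1:
  fixes P :: "(real^2) set"
  assumes "one_sided_convex P" and "card P \<ge> 2"
  shows "\<exists>E. geometric_graph P E \<and> planar_gg E \<and> increasing_chord P E \<and>
             card E = 2 * card P - 3"
proof -
  obtain p d e where "convex_chain p (card P) d e" and P: "p ` {..<card P} = P"
    using one_sided_convex_obtain_convex_chain[OF assms] by blast
  then interpret convex_chain p "card P" d e by simp
  show ?thesis
    using geometric_graph_edges planar_edges increasing_chord_edges card_edges unfolding P by blast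
qed

end
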